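(* Let $r=r(n)\ge3$ and $m=m(n)$ be integers with $r=o(n^{1/2})$ and $1\le m=O(\log(r^{-2}n))$. Let $\mathcal{H}^+_r(n,m)$ be the set of $H\in\mathcal{H}_r(n,m)$ such that: (a) any two edges share at most two vertices; (b) every cluster consists of exactly two edges; (c) any two distinct clusters are vertex-disjoint; (d) there are at most two clusters. Then, as $n\to\infty$, \[ \frac{|\mathcal{H}^+_r(n,m)|}{|\mathcal{H}_r(n,m)|}=1-O\Bigl(\frac{r^6m^2}{n^3}\Bigr). \]
   Context: $\mathcal{H}_r(n,m)$ is the set of $r$-uniform hypergraphs on $[n]$ with exactly $m$ edges. Two edges are linked if they share exactly two vertices; with $G_H$ the graph on the edges of $H$ whose adjacency is linkedness, a cluster of $H$ is the sub-hypergraph formed by the edges of a connected component of $G_H$ with at least two vertices. $\log$ is natural. *)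

theory Defs
  imports "HOL-Analysis.Analysis" "HOL-Library.Landau_Symbols"
begin

definition hypergraphs :: "nat \<Rightarrow> nat \<Rightarrow> nat \<Rightarrow> nat set set set" where
  "hypergraphs r n m = {H. H \<subseteq> {e. e \<subseteq> {1..n} \<and> card e = r} \<and> card H = m}"

text \<open>Two edges are linked if they share exactly two vertices (adjacency of G_H).\<close>
definition linked :: "nat set set \<Rightarrow> (nat set \<times> nat set) set" where
  "linked H = {(e, f). e \<in> H \<and> f \<in> H \<and> e \<noteq> f \<and> card (e \<inter> f) = 2}"

definition components :: "nat set set \<Rightarrow> nat set set set" where
  "components H = {{f \<in> H. (e, f) \<in> (linked H)\<^sup>*} | e. e \<in> H}"

definition clusters :: "nat set set \<Rightarrow> nat set set set" where
  "clusters H = {C \<in> components H. card C \<ge> 2}"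

definition good_hypergraphs :: "nat \<Rightarrow> nat \<Rightarrow> nat \<Rightarrow> nat set set set" where
  "good_hypergraphs r n m = {H \<in> hypergraphs r n m.
      (\<forall>e\<in>H. \<forall>f\<in>H. e \<noteq> f \<longrightarrow> card (e \<inter> f) \<le> 2) \<and>
      (\<forall>C\<in>clusters H. card C = 2) \<and>
      (\<forall>C1\<in>clusters H. \<forall>C2\<in>clusters H. C1 \<noteq> C2 \<longrightarrow> \<Union>C1 \<inter> \<Union>C2 = {}) \<and>
      card (clusters H) \<le> 2}"

end

theory Submission
  imports Defs
begin

text \<open>
  If no two edges share three vertices and at most one pair of edges is linked, then there is
  at most one cluster and it consists of two edges. So a hypergraph that is not good contains
  a heavy pair (two edges sharing at least three vertices), a linked path (three edges, consecutive
  ones sharing at least two vertices) or two linked pairs on four distinct edges. With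
  \<open>N = n choose r\<close> possible edges, a fixed set of \<open>k\<close> edges lies in at most a fraction
  \<open>(m/N)^k\<close> of all hypergraphs, and at most \<open>r^k (r/n)^k N\<close> edges share \<open>k\<close> vertices with
  a given edge. A union bound over the three configurations bounds the proportion of bad
  hypergraphs by \<open>r^6 m^2/n^3 \<cdot> (1 + r^2 m/n + r^2 m^2/n)\<close>, and the last factor stays
  bounded because \<open>m = O(log (n/r^2))\<close> forces \<open>r^2 m^2 / n = O(1)\<close>.
\<close>

lemma binomial_diff_le_ratio_pow:
  "k \<le> m \<Longrightarrow> m \<le> N \<Longrightarrow>
     real ((N - k) choose (m - k)) \<le> (real m / real N) ^ k * real (N choose m)"
proof (induction k arbitrary: N m)
  case 0
  then show ?case by simp
next
  case (Suc k)
  obtain N' where N: "N = Suc N'" using Suc.prems by (cases N) auto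
  obtain m' where m: "m = Suc m'" using Suc.prems by (cases m) auto
  have absorb: "real (N' choose m') = real m / real N * real (N choose m)"
  proof -
    have "real (Suc N') * real (N' choose m') = real (Suc N' choose Suc m') * real (Suc m')"
      using Suc_times_binomial_eq[of N' m'] by (metis of_nat_mult)
    then show ?thesis using N m by (simp add: field_simps)
  qed
  have ratio_mono: "real m' / real N' \<le> real m / real N"
    using Suc.prems N m by (cases "N' = 0") (simp_all add: field_simps)
  have "real ((N - Suc k) choose (m - Suc k)) = real ((N' - k) choose (m' - k))"
    using N m by simp
  also have "\<dots> \<le> (real m' / real N') ^ k * real (N' choose m')"
    using Suc.IH[of m' N'] Suc.prems N m by simp
  also have "\<dots> \<le> (real m / real N) ^ k * real (N' choose m')"
    by (intro mult_right_mono power_mono ratio_mono) auto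
  also have "\<dots> = (real m / real N) ^ Suc k * real (N choose m)"
    using absorb by simp
  finally show ?case .
qed

lemma card_supersets_le:
  assumes "finite V" "T \<subseteq> V"
  shows "card {f. f \<subseteq> V \<and> card f = r \<and> T \<subseteq> f} \<le> (card V - card T) choose (r - card T)"
proof -
  have fin_T: "finite T" using assms finite_subset by blast
  let ?rest = "{R. R \<subseteq> V - T \<and> card R = r - card T}"
  have "{f. f \<subseteq> V \<and> card f = r \<and> T \<subseteq> f} \<subseteq> (\<union>) T ` ?rest"
  proof
    fix f assume f: "f \<in> {f. f \<subseteq> V \<and> card f = r \<and> T \<subseteq> f}"
    then have "card (f - T) = r - card T"
      using assms finite_subset by (simp add: card_Diff_subset fin_T)
    moreover have "f = T \<union> (f - T)" using f by blast
    ultimately show "f \<in> (\<union>) T ` ?rest" using f by blast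
  qed
  moreover have fin_rest: "finite ?rest" using assms(1) by simp
  ultimately have "card {f. f \<subseteq> V \<and> card f = r \<and> T \<subseteq> f} \<le> card ((\<union>) T ` ?rest)"
    by (intro card_mono finite_imageI)
  also have "\<dots> \<le> card ?rest" by (rule card_image_le[OF fin_rest])
  also have "\<dots> = (card V - card T) choose (r - card T)"
    using assms by (simp add: n_subsets card_Diff_subset fin_T)
  finally show ?thesis .
qed

lemma card_supersets_le_ratio_pow:
  assumes "finite U" "S \<subseteq> U" "card S = k"
  shows "real (card {H. H \<subseteq> U \<and> card H = m \<and> S \<subseteq> H})
           \<le> (real m / real (card U)) ^ k * real (card U choose m)"
proof (cases "k \<le> m \<and> m \<le> card U")
  case False
  have "card S \<le> card H \<and> card H \<le> card U" if "H \<subseteq> U" "S \<subseteq> H" for H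
    using that assms by (meson card_mono finite_subset)
  then have no_supersets: "{H. H \<subseteq> U \<and> card H = m \<and> S \<subseteq> H} = {}"
    using False assms by fastforce
  show ?thesis unfolding no_supersets by simp
next
  case True
  have "card {H. H \<subseteq> U \<and> card H = m \<and> S \<subseteq> H} \<le> (card U - k) choose (m - k)"
    using card_supersets_le[OF assms(1,2), of m] assms(3) by simp
  then show ?thesis
    using binomial_diff_le_ratio_pow[of k m "card U"] True by (meson of_nat_le_iff order_trans)
qed

lemma card_overlapping_subsets_le:
  assumes "finite V" "e \<subseteq> V" "card e = r"
  shows "card {f. f \<subseteq> V \<and> card f = r \<and> k \<le> card (e \<inter> f)}
           \<le> (r choose k) * ((card V - k) choose (r - k))"
proof -
  have fin_e: "finite e" using assms finite_subset by blast
  let ?Ts = "{T. T \<subseteq> e \<and> card T = k}"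
  let ?sup = "\<lambda>T. {f. f \<subseteq> V \<and> card f = r \<and> T \<subseteq> f}"
  have "{f. f \<subseteq> V \<and> card f = r \<and> k \<le> card (e \<inter> f)} \<subseteq> (\<Union>T\<in>?Ts. ?sup T)"
  proof
    fix f assume f: "f \<in> {f. f \<subseteq> V \<and> card f = r \<and> k \<le> card (e \<inter> f)}"
    then obtain T where "T \<subseteq> e \<inter> f" "card T = k" using obtain_subset_with_card_n by blast
    then show "f \<in> (\<Union>T\<in>?Ts. ?sup T)" using f by blast
  qed
  then have "card {f. f \<subseteq> V \<and> card f = r \<and> k \<le> card (e \<inter> f)} \<le> card (\<Union>T\<in>?Ts. ?sup T)"
    by (rule card_mono[rotated]) (use assms(1) fin_e in auto)
  also have "\<dots> \<le> (\<Sum>T\<in>?Ts. card (?sup T))"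
    by (rule card_UN_le) (use fin_e in simp)
  also have "\<dots> \<le> (\<Sum>T\<in>?Ts. (card V - k) choose (r - k))"
    using card_supersets_le[OF assms(1)] assms(2) by (intro sum_mono) fastforce
  also have "\<dots> = (r choose k) * ((card V - k) choose (r - k))"
    using fin_e assms by (simp add: n_subsets)
  finally show ?thesis .
qed

lemma card_Sigma_le_uniform:
  assumes "finite A" "\<And>a. a \<in> A \<Longrightarrow> finite (B a)" "\<And>a. a \<in> A \<Longrightarrow> real (card (B a)) \<le> K"
  shows "real (card (Sigma A B)) \<le> real (card A) * K"
proof -
  have "real (card (Sigma A B)) = (\<Sum>a\<in>A. real (card (B a)))" using assms by simp
  also have "\<dots> \<le> (\<Sum>a\<in>A. K)" by (rule sum_mono) (use assms in auto)
  finally show ?thesis by simp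
qed

lemma ln_squared_le: "1 \<le> (x::real) \<Longrightarrow> (ln x)\<^sup>2 \<le> 4 * x"
proof -
  assume x: "1 \<le> x"
  have "ln x = 2 * ln (sqrt x)" using x by (simp add: ln_sqrt)
  also have "\<dots> \<le> 2 * sqrt x" using ln_le_minus_one[of "sqrt x"] x by simp
  finally have "(ln x)\<^sup>2 \<le> (2 * sqrt x)\<^sup>2" using x by (intro power_mono) auto
  then show ?thesis using x by (simp add: power_mult_distrib)
qed

definition r_subsets :: "nat \<Rightarrow> nat \<Rightarrow> nat set set" where
  "r_subsets n r = {e. e \<subseteq> {1..n} \<and> card e = r}"

definition overlapping :: "nat \<Rightarrow> nat \<Rightarrow> nat \<Rightarrow> nat set \<Rightarrow> nat set set" where
  "overlapping n r k e = {f \<in> r_subsets n r. k \<le> card (e \<inter> f)}"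

lemma finite_r_subsets: "finite (r_subsets n r)"
  unfolding r_subsets_def by (rule finite_subset[of _ "Pow {1..n}"]) auto

lemma card_r_subsets: "card (r_subsets n r) = n choose r"
  unfolding r_subsets_def using n_subsets[of "{1..n}" r] by simp

lemma finite_overlapping: "finite (overlapping n r k e)"
  unfolding overlapping_def using finite_r_subsets by simp

lemma hypergraphs_eq: "hypergraphs r n m = {H. H \<subseteq> r_subsets n r \<and> card H = m}"
  unfolding hypergraphs_def r_subsets_def by simp

lemma finite_hypergraphs: "finite (hypergraphs r n m)"
  unfolding hypergraphs_eq by (rule finite_subset[of _ "Pow (r_subsets n r)"]) (auto simp: finite_r_subsets)

lemma card_hypergraphs: "card (hypergraphs r n m) = (n choose r) choose m"
  unfolding hypergraphs_eq by (simp add: n_subsets finite_r_subsets card_r_subsets)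

lemma card_overlapping_le:
  assumes "e \<in> r_subsets n r" "k \<le> r" "r \<le> n"
  shows "real (card (overlapping n r k e)) \<le> real r ^ k * (real r / real n) ^ k * real (n choose r)"
proof -
  have "card (overlapping n r k e) \<le> (r choose k) * ((n - k) choose (r - k))"
    using card_overlapping_subsets_le[of "{1..n}" e r k] assms
    unfolding overlapping_def r_subsets_def by simp
  then have "real (card (overlapping n r k e)) \<le> real (r choose k) * real ((n - k) choose (r - k))"
    by (metis of_nat_le_iff of_nat_mult)
  also have "\<dots> \<le> real r ^ k * ((real r / real n) ^ k * real (n choose r))"
  proof (rule mult_mono)
    show "real (r choose k) \<le> real r ^ k"
      using binomial_le_pow[OF assms(2)] by (metis of_nat_le_iff of_nat_power)
    show "real ((n - k) choose (r - k)) \<le> (real r / real n) ^ k * real (n choose r)"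
      by (rule binomial_diff_le_ratio_pow) (use assms in auto)
  qed auto
  finally show ?thesis by simp
qed

lemma card_overlapping_pairs_le:
  assumes "k \<le> r" "r \<le> n"
  shows "real (card (Sigma (r_subsets n r) (overlapping n r k)))
           \<le> real r ^ k * (real r / real n) ^ k * real (n choose r) ^ 2"
proof -
  have "real (card (Sigma (r_subsets n r) (overlapping n r k)))
          \<le> real (card (r_subsets n r)) * (real r ^ k * (real r / real n) ^ k * real (n choose r))"
    by (rule card_Sigma_le_uniform[OF finite_r_subsets finite_overlapping card_overlapping_le])
      (use assms in auto)
  then show ?thesis by (simp only: card_r_subsets power2_eq_square mult_ac)
qed

lemma clusters_subset_if_linked_subset:
  assumes "linked H \<subseteq> {(a, b), (b, a)}"
  shows "clusters H \<subseteq> {{a, b}}"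
proof
  have reach: "f = e \<or> {e, f} = {a, b}" if "(e, f) \<in> (linked H)\<^sup>*" for e f
    using that assms by (induction rule: rtrancl_induct) auto
  fix C assume "C \<in> clusters H"
  then obtain e where C: "C = {f \<in> H. (e, f) \<in> (linked H)\<^sup>*}" and two_le: "2 \<le> card C"
    unfolding clusters_def components_def by auto
  have "C \<subseteq> {a, b}"
  proof (cases "e \<in> {a, b}")
    case True
    then show ?thesis using C reach by fastforce
  next
    case False
    then have "C \<subseteq> {e}" using C reach by fastforce
    then have "card C \<le> 1" using card_mono[of "{e}" C] by simp
    then show ?thesis using two_le by simp
  qed
  moreover have "card {a, b} \<le> card C" using two_le by (simp add: card_insert_if)
  ultimately show "C \<in> {{a, b}}" using card_seteq[of "{a, b}" C] by simp
qed

lemma good_hypergraphsI: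
  assumes "H \<in> hypergraphs r n m"
    and "\<And>e f. e \<in> H \<Longrightarrow> f \<in> H \<Longrightarrow> e \<noteq> f \<Longrightarrow> card (e \<inter> f) \<le> 2"
    and "linked H \<subseteq> {(a, b), (b, a)}"
  shows "H \<in> good_hypergraphs r n m"
proof -
  have clusters: "clusters H \<subseteq> {{a, b}}"
    using clusters_subset_if_linked_subset[OF assms(3)] .
  then have "card (clusters H) \<le> 1"
    using card_mono[of "{{a, b}}" "clusters H"] by simp
  moreover have "card C = 2" if "C \<in> clusters H" for C
  proof -
    have "C = {a, b}" "2 \<le> card C" using that clusters unfolding clusters_def by auto
    then show ?thesis by (simp add: card_insert_if split: if_splits)
  qed
  moreover have "C1 = C2" if "C1 \<in> clusters H" "C2 \<in> clusters H" for C1 C2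
    using that clusters by blast
  ultimately show ?thesis using assms(1,2) unfolding good_hypergraphs_def by auto
qed

definition has_heavy_pair :: "nat set set \<Rightarrow> bool" where
  "has_heavy_pair H \<longleftrightarrow> (\<exists>e\<in>H. \<exists>f\<in>H. e \<noteq> f \<and> 3 \<le> card (e \<inter> f))"

definition has_linked_path :: "nat set set \<Rightarrow> bool" where
  "has_linked_path H \<longleftrightarrow> (\<exists>e1\<in>H. \<exists>e2\<in>H. \<exists>e3\<in>H.
     e1 \<noteq> e2 \<and> e2 \<noteq> e3 \<and> e1 \<noteq> e3 \<and> 2 \<le> card (e1 \<inter> e2) \<and> 2 \<le> card (e2 \<inter> e3))"

definition has_two_linked_pairs :: "nat set set \<Rightarrow> bool" where
  "has_two_linked_pairs H \<longleftrightarrow> (\<exists>e1\<in>H. \<exists>e2\<in>H. \<exists>e3\<in>H. \<exists>e4\<in>H.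
     card {e1, e2, e3, e4} = 4 \<and> 2 \<le> card (e1 \<inter> e2) \<and> 2 \<le> card (e3 \<inter> e4))"

lemma has_linked_pathI:
  "e1 \<in> H \<Longrightarrow> e2 \<in> H \<Longrightarrow> e3 \<in> H \<Longrightarrow> e1 \<noteq> e2 \<Longrightarrow> e2 \<noteq> e3 \<Longrightarrow> e1 \<noteq> e3 \<Longrightarrow>
    2 \<le> card (e1 \<inter> e2) \<Longrightarrow> 2 \<le> card (e2 \<inter> e3) \<Longrightarrow> has_linked_path H"
  unfolding has_linked_path_def by blast

lemma has_two_linked_pairsI:
  "e1 \<in> H \<Longrightarrow> e2 \<in> H \<Longrightarrow> e3 \<in> H \<Longrightarrow> e4 \<in> H \<Longrightarrow> card {e1, e2, e3, e4} = 4 \<Longrightarrow>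
    2 \<le> card (e1 \<inter> e2) \<Longrightarrow> 2 \<le> card (e3 \<inter> e4) \<Longrightarrow> has_two_linked_pairs H"
  unfolding has_two_linked_pairs_def by blast

lemma linked_path_or_two_linked_pairs:
  assumes ab: "(a, b) \<in> linked H" and cd: "(c, d) \<in> linked H" "(c, d) \<notin> {(a, b), (b, a)}"
  shows "has_linked_path H \<or> has_two_linked_pairs H"
proof -
  have edges: "a \<in> H" "b \<in> H" "a \<noteq> b" "card (a \<inter> b) = 2" "c \<in> H" "d \<in> H" "c \<noteq> d" "card (c \<inter> d) = 2"
    using ab cd unfolding linked_def by auto
  have comm: "card (x \<inter> y) = card (y \<inter> x)" for x y :: "nat set"
    by (simp add: Int_commute)
  have "card {a, b, c, d} = 4" if "c \<noteq> a" "c \<noteq> b" "d \<noteq> a" "d \<noteq> b"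
    using that edges by (auto simp: card_insert_if)
  then consider "c = a" | "c = b" | "d = a" | "d = b" | "card {a, b, c, d} = 4" by blast
  then show ?thesis
  proof cases
    case 1
    then show ?thesis using has_linked_pathI[of b H a d] edges cd(2) comm by auto
  next
    case 2
    then show ?thesis using has_linked_pathI[of a H b d] edges cd(2) by auto
  next
    case 3
    then show ?thesis using has_linked_pathI[of c H a b] edges cd(2) by auto
  next
    case 4
    then show ?thesis using has_linked_pathI[of c H b a] edges cd(2) comm by auto
  next
    case 5
    then show ?thesis using has_two_linked_pairsI[of a H b c d] edges by auto
  qed
qed

lemma not_good_hypergraph_cases:
  assumes "H \<in> hypergraphs r n m" "H \<notin> good_hypergraphs r n m"
  shows "has_heavy_pair H \<or> has_linked_path H \<or> has_two_linked_pairs H"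
proof (cases "has_heavy_pair H")
  case False
  then have light: "card (e \<inter> f) \<le> 2" if "e \<in> H" "f \<in> H" "e \<noteq> f" for e f
    using that unfolding has_heavy_pair_def by fastforce
  have not_within: "\<not> linked H \<subseteq> {(a, b), (b, a)}" for a b
    using good_hypergraphsI[OF assms(1) light] assms(2) by blast
  \<comment> \<open>taking \<open>a = b\<close> shows \<open>linked H \<noteq> {}\<close>, as \<open>linked H\<close> is irreflexive\<close>
  obtain a b where ab: "(a, b) \<in> linked H" using not_within[of undefined undefined] by auto
  then obtain c d where "(c, d) \<in> linked H" "(c, d) \<notin> {(a, b), (b, a)}"
    using not_within[of a b] by (meson subrelI)
  then show ?thesis using linked_path_or_two_linked_pairs[OF ab] by blast
qed simp

lemma card_hypergraphs_containing_le:
  fixes S :: "'t \<Rightarrow> nat set set"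
  assumes "finite T" "\<And>t. t \<in> T \<Longrightarrow> S t \<subseteq> r_subsets n r \<and> card (S t) = k"
  shows "real (card {H \<in> hypergraphs r n m. \<exists>t\<in>T. S t \<subseteq> H})
           \<le> real (card T) * (real m / real (n choose r)) ^ k * real ((n choose r) choose m)"
proof -
  let ?U = "r_subsets n r"
  let ?sup = "\<lambda>t. {H. H \<subseteq> ?U \<and> card H = m \<and> S t \<subseteq> H}"
  have "{H \<in> hypergraphs r n m. \<exists>t\<in>T. S t \<subseteq> H} = (\<Union>t\<in>T. ?sup t)"
    unfolding hypergraphs_eq by blast
  then have "card {H \<in> hypergraphs r n m. \<exists>t\<in>T. S t \<subseteq> H} \<le> (\<Sum>t\<in>T. card (?sup t))"
    using card_UN_le[OF assms(1)] by simp
  then have "real (card {H \<in> hypergraphs r n m. \<exists>t\<in>T. S t \<subseteq> H}) \<le> (\<Sum>t\<in>T. real (card (?sup t)))"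
    unfolding of_nat_sum[symmetric] of_nat_le_iff .
  also have "\<dots> \<le> (\<Sum>t\<in>T. (real m / real (n choose r)) ^ k * real ((n choose r) choose m))"
  proof (rule sum_mono)
    fix t assume "t \<in> T"
    then have "S t \<subseteq> ?U" "card (S t) = k" using assms(2) by auto
    from card_supersets_le_ratio_pow[OF finite_r_subsets this, of m]
    show "real (card (?sup t)) \<le> (real m / real (n choose r)) ^ k * real ((n choose r) choose m)"
      by (simp only: card_r_subsets)
  qed
  finally show ?thesis by simp
qed

lemma card_hypergraphs_with_heavy_pair:
  assumes "3 \<le> r" "r \<le> n"
  shows "real (card {H \<in> hypergraphs r n m. has_heavy_pair H})
           \<le> real r ^ 3 * (real r / real n) ^ 3 * real m ^ 2 * real ((n choose r) choose m)"
proof -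
  let ?N = "real (n choose r)" and ?a = "real ((n choose r) choose m)"
  define T where "T = {p \<in> Sigma (r_subsets n r) (overlapping n r 3). fst p \<noteq> snd p}"
  have fin_T: "finite T"
    unfolding T_def using finite_r_subsets finite_overlapping by auto
  have "card T \<le> card (Sigma (r_subsets n r) (overlapping n r 3))"
    unfolding T_def by (rule card_mono) (use finite_r_subsets finite_overlapping in auto)
  then have card_T: "real (card T) \<le> real r ^ 3 * (real r / real n) ^ 3 * ?N ^ 2"
    using card_overlapping_pairs_le[of 3 r n] assms by linarith
  have "{H \<in> hypergraphs r n m. has_heavy_pair H}
          \<subseteq> {H \<in> hypergraphs r n m. \<exists>t\<in>T. {fst t, snd t} \<subseteq> H}"
    unfolding T_def overlapping_def hypergraphs_eq has_heavy_pair_def by fastforce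
  then have "card {H \<in> hypergraphs r n m. has_heavy_pair H}
               \<le> card {H \<in> hypergraphs r n m. \<exists>t\<in>T. {fst t, snd t} \<subseteq> H}"
    by (rule card_mono[rotated]) (simp add: finite_hypergraphs)
  also have "real \<dots> \<le> real (card T) * (real m / ?N) ^ 2 * ?a"
    by (rule card_hypergraphs_containing_le[OF fin_T])
      (auto simp: T_def overlapping_def)
  also have "\<dots> \<le> real r ^ 3 * (real r / real n) ^ 3 * ?N ^ 2 * (real m / ?N) ^ 2 * ?a"
    by (intro mult_right_mono card_T) auto
  also have "\<dots> = real r ^ 3 * (real r / real n) ^ 3 * real m ^ 2 * ?a"
    using assms by (simp add: power_divide)
  finally show ?thesis by simp
qed

lemma card_hypergraphs_with_linked_path:
  assumes "2 \<le> r" "r \<le> n"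
  shows "real (card {H \<in> hypergraphs r n m. has_linked_path H})
           \<le> real r ^ 4 * (real r / real n) ^ 4 * real m ^ 3 * real ((n choose r) choose m)"
proof -
  let ?N = "real (n choose r)" and ?a = "real ((n choose r) choose m)"
  let ?\<alpha> = "real r ^ 2 * (real r / real n) ^ 2 * ?N"
  define P where "P = Sigma (r_subsets n r) (overlapping n r 2)"
  define T where "T = {q \<in> Sigma P (\<lambda>p. overlapping n r 2 (snd p)).
                        fst (fst q) \<noteq> snd (fst q) \<and> snd (fst q) \<noteq> snd q \<and> fst (fst q) \<noteq> snd q}"
  have fin_P: "finite P" unfolding P_def using finite_r_subsets finite_overlapping by auto
  have fin_T: "finite T" unfolding T_def using fin_P finite_overlapping by auto
  have card_P: "real (card P) \<le> ?\<alpha> * ?N"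
    using card_overlapping_pairs_le[of 2 r n] assms unfolding P_def by (simp add: power2_eq_square)
  have "card T \<le> card (Sigma P (\<lambda>p. overlapping n r 2 (snd p)))"
    unfolding T_def by (rule card_mono) (use fin_P finite_overlapping in auto)
  also have "real \<dots> \<le> real (card P) * ?\<alpha>"
  proof (rule card_Sigma_le_uniform[OF fin_P finite_overlapping])
    fix p assume "p \<in> P"
    then show "real (card (overlapping n r 2 (snd p))) \<le> ?\<alpha>"
      using card_overlapping_le assms unfolding P_def overlapping_def by auto
  qed
  also have "\<dots> \<le> ?\<alpha> * ?N * ?\<alpha>"
    by (intro mult_right_mono card_P) auto
  finally have card_T: "real (card T) \<le> ?\<alpha> * ?N * ?\<alpha>" by simp
  have "{H \<in> hypergraphs r n m. has_linked_path H}
          \<subseteq> {H \<in> hypergraphs r n m. \<exists>t\<in>T. {fst (fst t), snd (fst t), snd t} \<subseteq> H}"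
  proof
    fix H assume "H \<in> {H \<in> hypergraphs r n m. has_linked_path H}"
    then obtain e1 e2 e3 where H: "H \<in> hypergraphs r n m" "e1 \<in> H" "e2 \<in> H" "e3 \<in> H"
      "e1 \<noteq> e2" "e2 \<noteq> e3" "e1 \<noteq> e3" "2 \<le> card (e1 \<inter> e2)" "2 \<le> card (e2 \<inter> e3)"
      unfolding has_linked_path_def by blast
    then have "((e1, e2), e3) \<in> T"
      unfolding T_def P_def overlapping_def hypergraphs_eq by auto
    then show "H \<in> {H \<in> hypergraphs r n m. \<exists>t\<in>T. {fst (fst t), snd (fst t), snd t} \<subseteq> H}"
      using H by force
  qed
  then have "card {H \<in> hypergraphs r n m. has_linked_path H}
          \<le> card {H \<in> hypergraphs r n m. \<exists>t\<in>T. {fst (fst t), snd (fst t), snd t} \<subseteq> H}"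
    by (rule card_mono[rotated]) (simp add: finite_hypergraphs)
  also have "real \<dots> \<le> real (card T) * (real m / ?N) ^ 3 * ?a"
    by (rule card_hypergraphs_containing_le[OF fin_T])
      (auto simp: T_def P_def overlapping_def)
  also have "\<dots> \<le> ?\<alpha> * ?N * ?\<alpha> * (real m / ?N) ^ 3 * ?a"
    by (intro mult_right_mono card_T) auto
  also have "\<dots> = real r ^ 4 * (real r / real n) ^ 4 * real m ^ 3 * ?a"
    using assms by (simp add: power_divide field_simps eval_nat_numeral)
  finally show ?thesis by simp
qed

lemma card_hypergraphs_with_two_linked_pairs:
  assumes "2 \<le> r" "r \<le> n"
  shows "real (card {H \<in> hypergraphs r n m. has_two_linked_pairs H})
           \<le> real r ^ 4 * (real r / real n) ^ 4 * real m ^ 4 * real ((n choose r) choose m)"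
proof -
  let ?N = "real (n choose r)" and ?a = "real ((n choose r) choose m)"
  let ?\<beta> = "real r ^ 2 * (real r / real n) ^ 2 * ?N ^ 2"
  define P where "P = Sigma (r_subsets n r) (overlapping n r 2)"
  define T where "T = {q \<in> P \<times> P. card {fst (fst q), snd (fst q), fst (snd q), snd (snd q)} = 4}"
  have fin_P: "finite P" unfolding P_def using finite_r_subsets finite_overlapping by auto
  have fin_T: "finite T" unfolding T_def using fin_P by auto
  have card_P: "real (card P) \<le> ?\<beta>"
    using card_overlapping_pairs_le[of 2 r n] assms unfolding P_def by simp
  have "card T \<le> card (P \<times> P)"
    unfolding T_def by (rule card_mono) (use fin_P in auto)
  then have "real (card T) \<le> real (card P) * real (card P)"
    by (metis card_cartesian_product of_nat_le_iff of_nat_mult)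
  also have "\<dots> \<le> ?\<beta> * ?\<beta>"
    by (intro mult_mono card_P) auto
  finally have card_T: "real (card T) \<le> ?\<beta> * ?\<beta>" .
  have "{H \<in> hypergraphs r n m. has_two_linked_pairs H}
          \<subseteq> {H \<in> hypergraphs r n m. \<exists>t\<in>T. {fst (fst t), snd (fst t), fst (snd t), snd (snd t)} \<subseteq> H}"
  proof
    fix H assume "H \<in> {H \<in> hypergraphs r n m. has_two_linked_pairs H}"
    then obtain e1 e2 e3 e4 where H: "H \<in> hypergraphs r n m" "e1 \<in> H" "e2 \<in> H" "e3 \<in> H" "e4 \<in> H"
      "card {e1, e2, e3, e4} = 4" "2 \<le> card (e1 \<inter> e2)" "2 \<le> card (e3 \<inter> e4)"
      unfolding has_two_linked_pairs_def by blast
    then have "((e1, e2), (e3, e4)) \<in> T"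
      unfolding T_def P_def overlapping_def hypergraphs_eq by auto
    then show "H \<in> {H \<in> hypergraphs r n m. \<exists>t\<in>T. {fst (fst t), snd (fst t), fst (snd t), snd (snd t)} \<subseteq> H}"
      using H by force
  qed
  then have "card {H \<in> hypergraphs r n m. has_two_linked_pairs H}
          \<le> card {H \<in> hypergraphs r n m. \<exists>t\<in>T. {fst (fst t), snd (fst t), fst (snd t), snd (snd t)} \<subseteq> H}"
    by (rule card_mono[rotated]) (simp add: finite_hypergraphs)
  also have "real \<dots> \<le> real (card T) * (real m / ?N) ^ 4 * ?a"
    by (rule card_hypergraphs_containing_le[OF fin_T])
      (auto simp: T_def P_def overlapping_def)
  also have "\<dots> \<le> ?\<beta> * ?\<beta> * (real m / ?N) ^ 4 * ?a"
    by (intro mult_right_mono card_T) auto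
  also have "\<dots> = real r ^ 4 * (real r / real n) ^ 4 * real m ^ 4 * ?a"
    using assms by (simp add: power_divide field_simps eval_nat_numeral)
  finally show ?thesis by simp
qed

lemma card_not_good_le:
  assumes "3 \<le> r" "r \<le> n"
  shows "real (card (hypergraphs r n m - good_hypergraphs r n m))
           \<le> real r ^ 6 * real m ^ 2 / real n ^ 3
               * (1 + real r ^ 2 * real m / real n + real r ^ 2 * real m ^ 2 / real n)
               * real ((n choose r) choose m)"
proof -
  let ?a = "real ((n choose r) choose m)"
  let ?A1 = "{H \<in> hypergraphs r n m. has_heavy_pair H}"
  let ?A2 = "{H \<in> hypergraphs r n m. has_linked_path H}"
  let ?A3 = "{H \<in> hypergraphs r n m. has_two_linked_pairs H}"
  have "hypergraphs r n m - good_hypergraphs r n m \<subseteq> ?A1 \<union> ?A2 \<union> ?A3"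
    using not_good_hypergraph_cases by blast
  then have "card (hypergraphs r n m - good_hypergraphs r n m) \<le> card (?A1 \<union> ?A2 \<union> ?A3)"
    by (rule card_mono[rotated]) (simp add: finite_hypergraphs)
  also have "\<dots> \<le> card ?A1 + card ?A2 + card ?A3"
    using card_Un_le[of "?A1 \<union> ?A2" ?A3] card_Un_le[of ?A1 ?A2] by linarith
  finally have "real (card (hypergraphs r n m - good_hypergraphs r n m))
                  \<le> real (card ?A1) + real (card ?A2) + real (card ?A3)"
    by (simp only: of_nat_add[symmetric] of_nat_le_iff)
  also have "\<dots> \<le> real r ^ 3 * (real r / real n) ^ 3 * real m ^ 2 * ?a
                  + real r ^ 4 * (real r / real n) ^ 4 * real m ^ 3 * ?a
                  + real r ^ 4 * (real r / real n) ^ 4 * real m ^ 4 * ?a"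
    using card_hypergraphs_with_heavy_pair[OF assms, of m]
      card_hypergraphs_with_linked_path[OF _ assms(2), of m]
      card_hypergraphs_with_two_linked_pairs[OF _ assms(2), of m] assms(1) by linarith
  also have "\<dots> = real r ^ 6 * real m ^ 2 / real n ^ 3
               * (1 + real r ^ 2 * real m / real n + real r ^ 2 * real m ^ 2 / real n) * ?a"
    using assms by (simp add: field_simps power_divide) (simp add: algebra_simps eval_nat_numeral)
  finally show ?thesis .
qed

lemma deviation_of_good_ratio_eq:
  assumes "m \<le> n choose r"
  shows "\<bar>real (card (good_hypergraphs r n m)) / real (card (hypergraphs r n m)) - 1\<bar>
           = real (card (hypergraphs r n m - good_hypergraphs r n m)) / real ((n choose r) choose m)"
proof -
  have total_pos: "0 < real ((n choose r) choose m)" using assms by simp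
  have good_sub: "good_hypergraphs r n m \<subseteq> hypergraphs r n m"
    unfolding good_hypergraphs_def by auto
  then have "real (card (good_hypergraphs r n m))
               = real (card (hypergraphs r n m)) - real (card (hypergraphs r n m - good_hypergraphs r n m))"
    using card_Diff_subset[OF finite_subset[OF good_sub finite_hypergraphs] good_sub]
      card_mono[OF finite_hypergraphs good_sub] by simp
  then show ?thesis using total_pos by (simp add: card_hypergraphs field_simps)
qed

lemma sq_mult_sq_div_le_of_le_ln:
  fixes r m n C :: real
  assumes "0 < r" "r\<^sup>2 \<le> n" "m \<le> C * ln (n / r\<^sup>2)" "0 \<le> m" "0 \<le> C"
  shows "r\<^sup>2 * m\<^sup>2 / n \<le> 4 * C\<^sup>2"
proof -
  have x: "1 \<le> n / r\<^sup>2" using assms by simp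
  have "m\<^sup>2 \<le> (C * ln (n / r\<^sup>2))\<^sup>2" using assms by (intro power_mono) auto
  also have "\<dots> \<le> C\<^sup>2 * (4 * (n / r\<^sup>2))"
    unfolding power_mult_distrib using ln_squared_le[OF x] by (intro mult_left_mono) auto
  finally have "r\<^sup>2 * m\<^sup>2 \<le> 4 * C\<^sup>2 * n" using assms(1) by (simp add: field_simps)
  moreover have "0 < n" using assms(1,2) by (meson order_less_le_trans zero_less_power)
  ultimately show ?thesis by (simp add: divide_le_eq)
qed

lemma le_choose_of_le_ln:
  fixes C :: real
  assumes "3 \<le> r" "(real r)\<^sup>2 \<le> real n" "real m \<le> C * ln (real n / (real r)\<^sup>2)"
    and "0 \<le> C" "C \<le> real n"
  shows "m \<le> n choose r"
proof -
  define x where "x = real n / (real r)\<^sup>2"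
  have r_pos: "0 < real r" using assms(1) by simp
  have x: "1 \<le> x" unfolding x_def using assms(2) r_pos by simp
  have "real r \<le> (real r)\<^sup>2" using assms(1) by (simp add: power2_eq_square)
  then have r_le_n: "r \<le> n" using assms(2) by linarith
  have "ln x \<le> x" using ln_le_minus_one[of x] x by simp
  then have "real m \<le> C * x"
    using assms(3,4) mult_left_mono unfolding x_def by fastforce
  also have "\<dots> \<le> real n * x" using assms(5) x by (simp add: mult_right_mono)
  also have "\<dots> = (real n / real r) ^ 2" unfolding x_def by (simp add: power2_eq_square)
  also have "\<dots> \<le> (real n / real r) ^ r"
    using r_le_n r_pos assms(1) by (intro power_increasing) auto
  also have "\<dots> \<le> real (n choose r)" using binomial_ge_n_over_k_pow_k[OF r_le_n] by simp
  finally show ?thesis by simp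
qed

lemma deviation_of_good_ratio_le:
  fixes C :: real
  assumes "3 \<le> r" "1 \<le> m" "real r \<le> sqrt (real n)"
    and "real m \<le> C * \<bar>ln (real n / (real r)\<^sup>2)\<bar>" "0 < C" "C \<le> real n"
  shows "\<bar>real (card (good_hypergraphs r n m)) / real (card (hypergraphs r n m)) - 1\<bar>
           \<le> (1 + 8 * C\<^sup>2) * \<bar>(real r) ^ 6 * (real m)\<^sup>2 / (real n) ^ 3\<bar>"
proof -
  let ?B = "real r ^ 6 * real m ^ 2 / real n ^ 3"
  have r_pos: "0 < real r" using assms(1) by simp
  have r_sq: "(real r)\<^sup>2 \<le> real n"
    using assms(3) by (metis of_nat_0_le_iff power_mono real_sqrt_pow2 real_sqrt_ge_zero)
  then have n_pos: "0 < real n" using r_pos by (meson order_less_le_trans zero_less_power)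
  have "real r \<le> (real r)\<^sup>2" using assms(1) by (simp add: power2_eq_square)
  then have r_le_n: "r \<le> n" using r_sq by linarith
  have m_le_ln: "real m \<le> C * ln (real n / (real r)\<^sup>2)"
    using assms(4) r_sq r_pos by simp
  have m_le_N: "m \<le> n choose r"
    using le_choose_of_le_ln[OF assms(1) r_sq m_le_ln] assms(5,6) by simp
  have key: "(real r)\<^sup>2 * (real m)\<^sup>2 / real n \<le> 4 * C\<^sup>2"
    using sq_mult_sq_div_le_of_le_ln[OF r_pos r_sq m_le_ln] assms(5) by simp
  have "(real r)\<^sup>2 * real m / real n \<le> (real r)\<^sup>2 * (real m)\<^sup>2 / real n"
    using assms(2) n_pos by (intro divide_right_mono mult_left_mono) (auto simp: power2_eq_square)
  then have factor_le: "1 + real r ^ 2 * real m / real n + real r ^ 2 * real m ^ 2 / real n \<le> 1 + 8 * C\<^sup>2"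
    using key by simp
  have "real (card (hypergraphs r n m - good_hypergraphs r n m)) / real ((n choose r) choose m)
      \<le> ?B * (1 + real r ^ 2 * real m / real n + real r ^ 2 * real m ^ 2 / real n)"
    using card_not_good_le[OF assms(1) r_le_n, of m] m_le_N by (simp add: divide_le_eq)
  also have "\<dots> \<le> ?B * (1 + 8 * C\<^sup>2)"
    by (rule mult_left_mono[OF factor_le]) simp
  finally show ?thesis
    using deviation_of_good_ratio_eq[OF m_le_N] by (simp add: mult.commute)
qed

theorem theorem8p1:
  fixes r m :: "nat \<Rightarrow> nat"
  assumes r3: "\<And>n. r n \<ge> 3"
    and r_small: "(\<lambda>n. real (r n)) \<in> o(\<lambda>n. sqrt (real n))"
    and m_pos: "\<And>n. m n \<ge> 1"
    and m_bound: "(\<lambda>n. real (m n)) \<in> O(\<lambda>n. ln (real n / (real (r n))\<^sup>2))"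
  shows "(\<lambda>n. real (card (good_hypergraphs (r n) n (m n))) / real (card (hypergraphs (r n) n (m n))) - 1)
           \<in> O(\<lambda>n. (real (r n))^6 * (real (m n))\<^sup>2 / (real n)^3)"
proof -
  obtain C where C: "C > 0"
    and m_le: "eventually (\<lambda>n. norm (real (m n)) \<le> C * norm (ln (real n / (real (r n))\<^sup>2))) at_top"
    using m_bound by (elim landau_o.bigE) auto
  have r_le: "eventually (\<lambda>n. norm (real (r n)) \<le> 1 * norm (sqrt (real n))) at_top"
    using landau_o.smallD[OF r_small, of 1] by simp
  have n_large: "eventually (\<lambda>n. C \<le> real n) at_top"
    by (metis eventually_at_top_linorder nat_ceiling_le_eq of_nat_le_iff le_trans)
  show ?thesis
  proof (rule bigoI[where c = "1 + 8 * C\<^sup>2"])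
    show "eventually (\<lambda>n. norm (real (card (good_hypergraphs (r n) n (m n)))
              / real (card (hypergraphs (r n) n (m n))) - 1)
            \<le> (1 + 8 * C\<^sup>2) * norm ((real (r n))^6 * (real (m n))\<^sup>2 / (real n)^3)) at_top"
      using r_le m_le n_large
      by eventually_elim (use deviation_of_good_ratio_le[OF r3 m_pos _ _ C] in simp)
  qed
qed

end
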